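(* Let $U\in\Omega$, $\alpha>0$, and suppose $\langle\nabla f(U),U\rangle<0$. Then $$\Pi_\Omega(U-\alpha\nabla f(U))=\Pi_{\mathcal C(\Omega)}(U-\alpha\nabla f(U)),$$ where $\mathcal C(\Omega)$ is the convex hull of $\Omega$.
   Context: $A\in\mathbb R^{n\times n}$ symmetric, $y\in\mathbb R^n$, $L\in\mathbb R$, $\beta>0$, integers $r,K\ge1$. $f(U)=\langle L I_n+A,UU^T\rangle+\langle y,UU^T\mathbf 1_n-\mathbf 1_n\rangle+\frac\beta2\|UU^T\mathbf 1_n-\mathbf 1_n\|_2^2$ for $U\in\mathbb R^{n\times r}$. $\Omega=\{U\in\mathbb R^{n\times r}:\|U\|_F^2=K,\ U\ge0\text{ entrywise}\}$. $\Pi_S$ denotes Euclidean (Frobenius) projection onto a set $S$; in particular $\Pi_\Omega(V)=\sqrt K(V)_+/\|(V)_+\|_F$ with $(V)_+=\max\{V,0\}$ entrywise. *)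

theory Defs
  imports "HOL-Analysis.Analysis"
begin

text \<open>Matrices in R^(n x r) are modelled as real^'r^'n (rows indexed by 'n).
  The inner product and norm on this type are the Frobenius ones.\<close>

definition ones :: "real^'n" where
  "ones = (\<chi> i. 1)"

definition fobj :: "real \<Rightarrow> real^'n^'n \<Rightarrow> real^'n \<Rightarrow> real \<Rightarrow> real^'r^'n \<Rightarrow> real" where
  "fobj L A y \<beta> U =
     (L *\<^sub>R mat 1 + A) \<bullet> (U ** transpose U)
     + y \<bullet> ((U ** transpose U) *v ones - ones)
     + \<beta> / 2 * (norm ((U ** transpose U) *v ones - ones))^2"

definition Omega :: "nat \<Rightarrow> (real^'r^'n) set" where
  "Omega K = {U. (norm U)^2 = real K \<and> (\<forall>i j. U $ i $ j \<ge> 0)}"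

definition grad :: "('a::real_inner \<Rightarrow> real) \<Rightarrow> 'a \<Rightarrow> 'a" where
  "grad F x = (THE g. (F has_derivative (\<lambda>h. g \<bullet> h)) (at x))"

end

theory Submission
  imports Defs
begin

text \<open>Write \<open>V = U - \<alpha> \<nabla>f(U)\<close>. Since \<open>\<langle>\<nabla>f(U), U\<rangle> < 0\<close> we get \<open>\<langle>V, U\<rangle> > K\<close>, and as \<open>U\<close> is
  entrywise nonnegative, \<open>\<langle>V\<^sub>+, U\<rangle> \<ge> \<langle>V, U\<rangle>\<close>; Cauchy-Schwarz then gives \<open>\<parallel>V\<^sub>+\<parallel> > \<surd>K\<close>.
  The point \<open>p = \<surd>K V\<^sub>+ / \<parallel>V\<^sub>+\<parallel>\<close> lies in \<open>\<Omega>\<close>, and for every \<open>c \<in> \<Omega>\<close> the same two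
  estimates give the obtuse-angle inequality \<open>\<langle>V - p, c - p\<rangle> \<le> 0\<close>. This inequality is a
  halfspace condition on \<open>c\<close>, so it persists on the convex hull, and it characterises \<open>p\<close>
  as the unique nearest point to \<open>V\<close> in both sets. Only the sign of \<open>\<langle>\<nabla>f(U), U\<rangle>\<close> is used,
  not the form of \<open>f\<close>.\<close>

lemma closest_point_eq_if_obtuse:
  fixes S :: "'a::{real_inner,heine_borel} set"
  assumes "p \<in> S" and obtuse: "\<And>c. c \<in> S \<Longrightarrow> (v - p) \<bullet> (c - p) \<le> 0"
  shows "closest_point S v = p"
proof -
  have closer: "dist v p < dist v c" if "c \<in> S" "c \<noteq> p" for c
  proof -
    have "(dist v c)\<^sup>2 = (dist v p)\<^sup>2 + (norm (c - p))\<^sup>2 - 2 * ((v - p) \<bullet> (c - p))"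
      using dot_norm_neg[of "v - p" "c - p"] by (simp add: dist_norm)
    moreover have "(norm (c - p))\<^sup>2 > 0" using \<open>c \<noteq> p\<close> by simp
    ultimately have "(dist v p)\<^sup>2 < (dist v c)\<^sup>2" using obtuse[OF \<open>c \<in> S\<close>] by linarith
    then show ?thesis by (simp add: power_less_imp_less_base)
  qed
  show ?thesis
    unfolding closest_point_def
  proof (rule some_equality)
    show "p \<in> S \<and> (\<forall>c\<in>S. dist v p \<le> dist v c)"
      using \<open>p \<in> S\<close> closer by (metis less_imp_le order_refl)
  next
    fix x assume "x \<in> S \<and> (\<forall>c\<in>S. dist v x \<le> dist v c)"
    then show "x = p" using \<open>p \<in> S\<close> closer by (meson not_le)
  qed
qed

lemma obtuse_convex_hull:
  fixes S :: "'a::real_inner set"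
  assumes "\<And>c. c \<in> S \<Longrightarrow> (v - p) \<bullet> (c - p) \<le> 0" and "c \<in> convex hull S"
  shows "(v - p) \<bullet> (c - p) \<le> 0"
proof -
  have "convex hull S \<subseteq> {c. (v - p) \<bullet> c \<le> (v - p) \<bullet> p}"
    by (rule hull_minimal) (use assms(1) in \<open>auto simp: convex_halfspace_le inner_diff_right\<close>)
  then show ?thesis using assms(2) by (auto simp: inner_diff_right)
qed

definition mat_pos_part :: "real^'m^'n \<Rightarrow> real^'m^'n" where
  "mat_pos_part V = (\<chi> i j. max (V $ i $ j) 0)"

lemma inner_mat_mono:
  fixes a b c d :: "real^'m^'n"
  assumes "\<And>i j. a $ i $ j * b $ i $ j \<le> c $ i $ j * d $ i $ j"
  shows "a \<bullet> b \<le> c \<bullet> d"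
  unfolding inner_vec_def by (intro sum_mono) (simp add: inner_vec_def sum_mono assms)

lemma inner_le_inner_mat_pos_part:
  fixes V C :: "real^'m^'n"
  assumes "\<And>i j. C $ i $ j \<ge> 0"
  shows "V \<bullet> C \<le> mat_pos_part V \<bullet> C"
  by (rule inner_mat_mono) (simp add: mat_pos_part_def assms mult_right_mono)

lemma inner_mat_pos_part_self:
  fixes V :: "real^'m^'n"
  shows "V \<bullet> mat_pos_part V = (norm (mat_pos_part V))\<^sup>2"
  unfolding power2_norm_eq_inner
  by (rule antisym; rule inner_mat_mono; simp add: mat_pos_part_def max_def)

lemma Omega_memberD:
  assumes "C \<in> Omega K"
  shows "norm C = sqrt (real K)" and "\<And>i j. C $ i $ j \<ge> 0"
  using assms real_sqrt_unique[of "norm C" "real K"] unfolding Omega_def by auto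

lemma norm_mat_pos_part_gt:
  assumes "U \<in> Omega K" and "V \<bullet> U > real K"
  shows "norm (mat_pos_part V) > sqrt (real K)"
proof -
  have "real K < mat_pos_part V \<bullet> U"
    using assms(2) inner_le_inner_mat_pos_part[OF Omega_memberD(2)[OF assms(1)], of V] by linarith
  also have "\<dots> \<le> norm (mat_pos_part V) * sqrt (real K)"
    using norm_cauchy_schwarz[of "mat_pos_part V" U] Omega_memberD(1)[OF assms(1)] by simp
  finally have "sqrt (real K) * sqrt (real K) < norm (mat_pos_part V) * sqrt (real K)"
    by simp
  then show ?thesis by (rule mult_right_less_imp_less) simp
qed

lemma obtuse_rescaled_mat_pos_part:
  fixes V :: "real^'m^'n" and K :: nat
  defines "t \<equiv> norm (mat_pos_part V)" and "s \<equiv> sqrt (real K)"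
  defines "p \<equiv> (s / t) *\<^sub>R mat_pos_part V"
  assumes "t > s" and "c \<in> Omega K"
  shows "(V - p) \<bullet> (c - p) \<le> 0"
proof -
  let ?P = "mat_pos_part V"
  have s0: "s \<ge> 0" unfolding s_def by simp
  have t0: "t > 0" using assms(4) s0 by linarith
  have Pc: "?P \<bullet> c \<le> t * s"
    using norm_cauchy_schwarz[of ?P c] Omega_memberD(1)[OF assms(5)] by (simp add: t_def s_def)
  have Vp: "V \<bullet> p = s * t"
    using t0 by (simp add: p_def inner_mat_pos_part_self t_def[symmetric] power2_eq_square)
  have pp: "p \<bullet> p = s * s"
    using t0 by (simp add: p_def t_def[symmetric] power2_norm_eq_inner[symmetric] power2_eq_square)
  have "(V - p) \<bullet> (c - p) = V \<bullet> c - (s / t) * (?P \<bullet> c) - V \<bullet> p + p \<bullet> p"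
    by (simp add: p_def inner_diff_left inner_diff_right inner_commute)
  also have "\<dots> = V \<bullet> c - (s / t) * (?P \<bullet> c) - s * t + s * s"
    by (simp only: Vp pp)
  also have "\<dots> \<le> (1 - s / t) * (?P \<bullet> c) - s * t + s * s"
    using inner_le_inner_mat_pos_part[OF Omega_memberD(2)[OF assms(5)], of V]
    by (simp add: left_diff_distrib)
  also have "\<dots> \<le> (1 - s / t) * (t * s) - s * t + s * s"
    using mult_left_mono[OF Pc] assms(4) t0 by simp
  also have "\<dots> = 0" using t0 by (simp add: field_simps)
  finally show ?thesis .
qed

lemma rescaled_mat_pos_part_in_Omega:
  assumes "norm (mat_pos_part V) > 0"
  shows "(sqrt (real K) / norm (mat_pos_part V)) *\<^sub>R mat_pos_part V \<in> Omega K"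
  using assms by (simp add: Omega_def mat_pos_part_def)

lemma closest_point_Omega_eq_convex_hull:
  assumes "U \<in> Omega K" and "V \<bullet> U > real K"
  shows "closest_point (Omega K) V = closest_point (convex hull (Omega K)) V"
proof -
  define p where "p = (sqrt (real K) / norm (mat_pos_part V)) *\<^sub>R mat_pos_part V"
  have gt: "norm (mat_pos_part V) > sqrt (real K)" by (rule norm_mat_pos_part_gt[OF assms])
  then have "p \<in> Omega K"
    unfolding p_def by (intro rescaled_mat_pos_part_in_Omega) (use real_sqrt_ge_zero in fastforce)
  have obtuse: "(V - p) \<bullet> (c - p) \<le> 0" if "c \<in> Omega K" for c
    unfolding p_def by (rule obtuse_rescaled_mat_pos_part[OF gt that])
  have "closest_point (Omega K) V = p"
    by (rule closest_point_eq_if_obtuse[OF \<open>p \<in> Omega K\<close> obtuse])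
  moreover have "closest_point (convex hull (Omega K)) V = p"
    using \<open>p \<in> Omega K\<close> hull_subset[of "Omega K" convex]
    by (intro closest_point_eq_if_obtuse obtuse_convex_hull[OF obtuse]) auto
  ultimately show ?thesis by simp
qed

theorem lemma19:
  fixes A :: "real^'n^'n" and y :: "real^'n" and L \<beta> \<alpha> :: real
    and K :: nat and U :: "real^'r^'n"
  assumes "transpose A = A" and "\<beta> > 0" and "K \<ge> 1"
    and "U \<in> Omega K" and "\<alpha> > 0"
    and "grad (fobj L A y \<beta>) U \<bullet> U < 0"
  shows "closest_point (Omega K) (U - \<alpha> *\<^sub>R grad (fobj L A y \<beta>) U)
       = closest_point (convex hull (Omega K)) (U - \<alpha> *\<^sub>R grad (fobj L A y \<beta>) U)"
proof (rule closest_point_Omega_eq_convex_hull[OF \<open>U \<in> Omega K\<close>])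
  let ?G = "grad (fobj L A y \<beta>) U"
  have "U \<bullet> U = real K"
    using Omega_memberD(1)[OF \<open>U \<in> Omega K\<close>] by (simp flip: power2_norm_eq_inner)
  moreover have "\<alpha> * (?G \<bullet> U) < 0" using assms(5,6) by (simp add: mult_pos_neg)
  ultimately show "(U - \<alpha> *\<^sub>R ?G) \<bullet> U > real K" by (simp add: inner_diff_left)
qed

end
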